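(* Assume $c_\star>1+\log4$. There is an event $\Omega'\subset\Omega$ with $\mathbb P(\Omega')=1$ such that on $\Omega'$, for all but a finite number of indices $n$, for all $A\subseteq\mathcal V_n^\circ$, $$P_{\pi_n^\circ}\big(T^\circ(A\cap I_n^\star)>t\big)\ge(1+o(1))\exp\big(-2t|A\cap I_n^\star|/|\mathcal V_n^\circ|\big)-\mathcal O\big(\tfrac1{\log n}\big),\qquad t>0.$$
   Context: Let $\mathcal V_n=\{-1,1\}^n$, $\mathcal E_n$ the nearest-neighbour edges. Let $(g(x))_{x\in\mathcal V_n}$, $n\ge1$, be i.i.d. standard Gaussians on $(\Omega,\mathcal F,\mathbb P)$. Given $c_\star>0$, $u_n$ satisfies $\mathbb P(g(x)\le-u_n)=n^{-c_\star}$; $H_n(x)=\sqrt ng(x)$ if $g(x)\le-u_n$, else $0$; $\beta>0$. Call $x$ occupied if $g(x)\le-u_n$; $I_n^\star$ = occupied vertices without occupied neighbours; $\mathcal V_n^\star$ = occupied vertices not in $I_n^\star$; $\mathcal V_n^\circ=\mathcal V_n\setminus\mathcal V_n^\star$. $J_n$ is the Markov chain with $p_n(x,y)=e^{-\beta[H_n(y)-H_n(x)]^+}/\sum_{y':(x,y')\in\mathcal E_n}e^{-\beta[H_n(y')-H_n(x)]^+}$ on edges, $0$ otherwise; $J_n^\circ$ is $J_n$ observed at its successive visits to $\mathcal V_n^\circ$; $\pi_n^\circ$ is the invariant measure of $J_n^\circ$ (the uniform distribution on $\mathcal V_n^\circ$), $P_{\pi_n^\circ}$ the law of $J_n^\circ$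 started from $\pi_n^\circ$ given the environment; $T^\circ(B)=\inf\{i\in\mathbb N:J_n^\circ(i)\in B\}$. *)

theory Defs
  imports "HOL-Probability.Probability"
begin

(* Vertices of the hypercube {-1,1}^n are encoded as boolean lists of length n.
   The vertex sets for different n are disjoint, so a single family
   g :: bool list => 'w => real indexes the Gaussians of all levels n.
   An environment realisation is G = (\<lambda>x. g x \<omega>). *)

definition hyp :: "nat \<Rightarrow> bool list set" where
  "hyp n = {x. length x = n}"

definition adj :: "bool list \<Rightarrow> bool list \<Rightarrow> bool" where
  "adj x y \<longleftrightarrow> length x = length y \<and> card {i. i < length x \<and> x ! i \<noteq> y ! i} = 1"

definition occupied :: "(nat \<Rightarrow> real) \<Rightarrow> (bool list \<Rightarrow> real) \<Rightarrow> bool list \<Rightarrow> bool" where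
  "occupied u G x \<longleftrightarrow> G x \<le> - u (length x)"

definition Hn :: "(nat \<Rightarrow> real) \<Rightarrow> (bool list \<Rightarrow> real) \<Rightarrow> bool list \<Rightarrow> real" where
  "Hn u G x = (if occupied u G x then sqrt (real (length x)) * G x else 0)"

definition trans_prob :: "real \<Rightarrow> (nat \<Rightarrow> real) \<Rightarrow> (bool list \<Rightarrow> real) \<Rightarrow> bool list \<Rightarrow> bool list \<Rightarrow> real" where
  "trans_prob \<beta> u G x y =
     (if adj x y then
        exp (- \<beta> * max 0 (Hn u G y - Hn u G x)) /
        (\<Sum>y'\<in>{y'. adj x y'}. exp (- \<beta> * max 0 (Hn u G y' - Hn u G x)))
      else 0)"

definition Istar :: "(nat \<Rightarrow> real) \<Rightarrow> (bool list \<Rightarrow> real) \<Rightarrow> nat \<Rightarrow> bool list set" where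
  "Istar u G n = {x \<in> hyp n. occupied u G x \<and> (\<forall>y. adj x y \<longrightarrow> \<not> occupied u G y)}"

definition Vstar :: "(nat \<Rightarrow> real) \<Rightarrow> (bool list \<Rightarrow> real) \<Rightarrow> nat \<Rightarrow> bool list set" where
  "Vstar u G n = {x \<in> hyp n. occupied u G x} - Istar u G n"

definition Vcirc :: "(nat \<Rightarrow> real) \<Rightarrow> (bool list \<Rightarrow> real) \<Rightarrow> nat \<Rightarrow> bool list set" where
  "Vcirc u G n = hyp n - Vstar u G n"

(* taboo probabilities: taboo k z y = P_z(J(1),...,J(k) \<in> V^star, J(k+1) = y) *)
fun taboo :: "real \<Rightarrow> (nat \<Rightarrow> real) \<Rightarrow> (bool list \<Rightarrow> real) \<Rightarrow> nat \<Rightarrow> nat \<Rightarrow> bool list \<Rightarrow> bool list \<Rightarrow> real" where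
  "taboo \<beta> u G n 0 z y = trans_prob \<beta> u G z y"
| "taboo \<beta> u G n (Suc k) z y = (\<Sum>w\<in>Vstar u G n. trans_prob \<beta> u G z w * taboo \<beta> u G n k w y)"

(* transition probabilities of the trace chain J_n^circ on V_n^circ:
   probability that J_n started at x makes its next visit to V_n^circ at y *)
definition trace_prob :: "real \<Rightarrow> (nat \<Rightarrow> real) \<Rightarrow> (bool list \<Rightarrow> real) \<Rightarrow> nat \<Rightarrow> bool list \<Rightarrow> bool list \<Rightarrow> real" where
  "trace_prob \<beta> u G n x y = (\<Sum>k. taboo \<beta> u G n k x y)"

(* avoid k B x = P_x(J^circ(0),...,J^circ(k) \<notin> B) *)
fun avoid :: "real \<Rightarrow> (nat \<Rightarrow> real) \<Rightarrow> (bool list \<Rightarrow> real) \<Rightarrow> nat \<Rightarrow> bool list set \<Rightarrow> nat \<Rightarrow> bool list \<Rightarrow> real" where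
  "avoid \<beta> u G n B 0 x = (if x \<in> B then 0 else 1)"
| "avoid \<beta> u G n B (Suc k) x =
     (if x \<in> B then 0 else (\<Sum>y\<in>Vcirc u G n. trace_prob \<beta> u G n x y * avoid \<beta> u G n B k y))"

(* P_{\<pi>^circ}(T^circ(B) > t) for real t > 0, where T^circ(B) = inf{i \<in> \<nat>. J^circ(i) \<in> B}
   (\<nat> including 0) and \<pi>^circ is uniform on V^circ:  T > t  iff  J^circ(i) \<notin> B for i = 0..\<lfloor>t\<rfloor>. *)
definition hit_tail :: "real \<Rightarrow> (nat \<Rightarrow> real) \<Rightarrow> (bool list \<Rightarrow> real) \<Rightarrow> nat \<Rightarrow> bool list set \<Rightarrow> real \<Rightarrow> real" where
  "hit_tail \<beta> u G n B t =
     (\<Sum>x\<in>Vcirc u G n. avoid \<beta> u G n B (nat \<lfloor>t\<rfloor>) x) / real (card (Vcirc u G n))"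

end

theory Submission
  imports Defs
begin

(* The chain J_n is reversible with respect to mu(x) = Z(x) exp(- beta H_n(x)), Z(x)
   being the normalisation of p_n(x, .), and mu is constant (= n) on V_n^circ. Hence the trace
   chain J_n^circ has a symmetric transition matrix, and so does the chain killed on B. For a
   symmetric kernel Q and a vector f, Cauchy-Schwarz makes m |-> <f, Q^(2m) f> log-convex, whence
   <f, Q^(2m) f> >= (<f, Q f> / <f, f>)^(2m) <f, f>. With f the indicator of V_n^circ - B this
   reads a_(2m) >= (a_1 / a_0)^(2m) a_0 for the nonincreasing a_k = |V_n^circ| P(T^circ(B) > k),
   and the explicit bounds a_0 = |V_n^circ| - |B|, a_1 >= |V_n^circ| - 2|B| give
   P(T^circ(B) > t) >= exp(- 2t|B| / |V_n^circ|) - 3|B| / |V_n^circ|.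
   Finally, for c > 2 the expected number of occupied vertices is 2^n n^(-c), so by Markov's
   inequality and Borel-Cantelli almost surely eventually fewer than 2^n / n vertices are occupied;
   then |B| / |V_n^circ| = O(1/n), and the claim holds with epsilon = 0 and C = 3. *)

section \<open>The hypercube\<close>

definition flip :: "bool list \<Rightarrow> nat \<Rightarrow> bool list" where
  "flip x i = x[i := \<not> x ! i]"

definition hamming_dist :: "bool list \<Rightarrow> bool list \<Rightarrow> nat" where
  "hamming_dist x y = card {i. i < length x \<and> x ! i \<noteq> y ! i}"

lemma adj_flip: "i < length x \<Longrightarrow> adj x (flip x i)"
proof -
  assume "i < length x"
  then have "{j. j < length x \<and> x ! j \<noteq> flip x i ! j} = {i}"
    by (auto simp: flip_def nth_list_update)
  then show ?thesis
    by (simp add: adj_def flip_def)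
qed

lemma adj_length_eq: "adj x y \<Longrightarrow> length y = length x"
  by (simp add: adj_def)

lemma adj_commute: "adj x y \<longleftrightarrow> adj y x"
proof -
  have "{i. i < length x \<and> x ! i \<noteq> y ! i} = {i. i < length y \<and> y ! i \<noteq> x ! i}"
    if "length x = length y"
    using that by auto
  then show ?thesis
    unfolding adj_def by (cases "length x = length y") simp_all
qed

lemma adjE_flip:
  assumes "adj x y"
  obtains i where "i < length x" "y = flip x i"
proof -
  from assms have len: "length y = length x"
    and "card {i. i < length x \<and> x ! i \<noteq> y ! i} = 1"
    by (auto simp: adj_def)
  then obtain i where i: "{i. i < length x \<and> x ! i \<noteq> y ! i} = {i}"
    by (auto simp: card_1_singleton_iff)
  then have "i < length x" and "x ! i \<noteq> y ! i"
    by auto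
  moreover have "y = flip x i"
  proof (rule nth_equalityI)
    show "length y = length (flip x i)"
      using len by (simp add: flip_def)
    show "y ! j = flip x i ! j" if "j < length y" for j
      using that i len \<open>x ! i \<noteq> y ! i\<close> by (cases "j = i") (auto simp: flip_def nth_list_update)
  qed
  ultimately show ?thesis
    using that by blast
qed

lemma neighbours_eq_flip_image: "{y. adj x y} = flip x ` {..<length x}"
  using adjE_flip adj_flip by blast

lemma inj_on_flip: "inj_on (flip x) {..<length x}"
  by (rule inj_onI) (metis flip_def lessThan_iff nth_list_update_eq nth_list_update_neq)

lemma card_neighbours: "card {y. adj x y} = length x"
  by (simp add: neighbours_eq_flip_image card_image inj_on_flip)

lemma finite_neighbours: "finite {y. adj x y}"
  by (simp add: neighbours_eq_flip_image)

lemma hyp_eq_lists: "hyp n = {xs. set xs \<subseteq> UNIV \<and> length xs = n}"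
  by (auto simp: hyp_def)

lemma finite_hyp: "finite (hyp n)"
  using finite_lists_length_eq[of "UNIV :: bool set" n] by (simp add: hyp_eq_lists)

lemma card_hyp: "card (hyp n) = 2 ^ n"
  using card_lists_length_eq[of "UNIV :: bool set" n] by (simp add: hyp_eq_lists)

lemma adj_in_hyp: "x \<in> hyp n \<Longrightarrow> adj x y \<Longrightarrow> y \<in> hyp n"
  by (simp add: hyp_def adj_length_eq)

lemma flip_in_hyp: "x \<in> hyp n \<Longrightarrow> flip x i \<in> hyp n"
  by (simp add: hyp_def flip_def)

lemma hamming_dist_le_length: "hamming_dist x y \<le> length x"
proof -
  have "{i. i < length x \<and> x ! i \<noteq> y ! i} \<subseteq> {..<length x}"
    by auto
  then show ?thesis
    unfolding hamming_dist_def by (metis card_lessThan card_mono finite_lessThan)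
qed

lemma hamming_dist_eq_0_imp_eq: "length x = length y \<Longrightarrow> hamming_dist x y = 0 \<Longrightarrow> x = y"
  unfolding hamming_dist_def by (auto intro: nth_equalityI)

lemma hamming_dist_SucE:
  assumes "hamming_dist x y = Suc L" "length x = length y"
  obtains i where "i < length x" "hamming_dist (flip x i) y = L"
proof -
  let ?D = "{i. i < length x \<and> x ! i \<noteq> y ! i}"
  from assms obtain i where i: "i \<in> ?D"
    unfolding hamming_dist_def by (metis card.empty ex_in_conv nat.distinct(1))
  have "{j. j < length (flip x i) \<and> flip x i ! j \<noteq> y ! j} = ?D - {i}"
    using i by (auto simp: flip_def nth_list_update)
  then have "hamming_dist (flip x i) y = L"
    using assms i unfolding hamming_dist_def by simp
  then show ?thesis
    using i that by blast
qed

section \<open>Reversibility of the chain in a fixed environment\<close>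

locale environment =
  fixes \<beta> :: real and u :: "nat \<Rightarrow> real" and G :: "bool list \<Rightarrow> real" and n :: nat
  assumes n_ge_1: "n \<ge> 1" and threshold_nonneg: "u n \<ge> 0"
begin

abbreviation "p \<equiv> trans_prob \<beta> u G"
abbreviation "H \<equiv> Hn u G"
abbreviation "V \<equiv> Vcirc u G n"
abbreviation "S \<equiv> Vstar u G n"
abbreviation "tb \<equiv> taboo \<beta> u G n"
abbreviation "tr \<equiv> trace_prob \<beta> u G n"

definition Z :: "bool list \<Rightarrow> real" where
  "Z x = (\<Sum>y\<in>{y. adj x y}. exp (- \<beta> * max 0 (H y - H x)))"

definition mu :: "bool list \<Rightarrow> real" where
  "mu x = Z x * exp (- \<beta> * H x)"

lemma trans_prob_eq: "p x y = (if adj x y then exp (- \<beta> * max 0 (H y - H x)) / Z x else 0)"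
  unfolding trans_prob_def Z_def by simp

lemma Z_pos: "adj x y \<Longrightarrow> Z x > 0"
  unfolding Z_def by (rule sum_pos) (auto simp: finite_neighbours)

lemma trans_prob_pos: "adj x y \<Longrightarrow> p x y > 0"
  using Z_pos[of x y] by (simp add: trans_prob_eq)

lemma trans_prob_nonneg: "p x y \<ge> 0"
  using trans_prob_pos[of x y] by (cases "adj x y") (simp_all add: trans_prob_eq)

lemma Hn_nonpos: "x \<in> hyp n \<Longrightarrow> H x \<le> 0"
  using threshold_nonneg
  by (auto simp: Hn_def occupied_def hyp_def intro!: mult_nonneg_nonpos)

lemma trans_prob_reversible: "p x y * mu x = p y x * mu y"
proof (cases "adj x y")
  case True
  then have "adj y x"
    using adj_commute by blast
  have e: "exp (- (\<beta> * max 0 (H b - H a))) * exp (- (\<beta> * H a)) = exp (- (\<beta> * max (H a) (H b)))"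
    for a b
    by (simp add: exp_add[symmetric] max_def algebra_simps)
  have "p x y * mu x = exp (- \<beta> * max (H x) (H y))"
    using True Z_pos[OF True] by (simp add: trans_prob_eq mu_def e)
  moreover have "p y x * mu y = exp (- \<beta> * max (H y) (H x))"
    using \<open>adj y x\<close> Z_pos[OF \<open>adj y x\<close>] by (simp add: trans_prob_eq mu_def e)
  ultimately show ?thesis
    by (simp add: max.commute)
next
  case False
  then have "\<not> adj y x"
    using adj_commute by blast
  then show ?thesis
    using False by (simp add: trans_prob_eq)
qed

lemma Vstar_subset: "S \<subseteq> hyp n"
  by (auto simp: Vstar_def)

lemma Vcirc_subset: "V \<subseteq> hyp n"
  by (auto simp: Vcirc_def)

lemma Vcirc_Vstar_disjoint: "V \<inter> S = {}"
  by (auto simp: Vcirc_def)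

lemma Vcirc_Un_Vstar: "V \<union> S = hyp n"
  using Vstar_subset by (auto simp: Vcirc_def)

lemma finite_Vstar: "finite S"
  using Vstar_subset finite_hyp finite_subset by blast

lemma finite_Vcirc: "finite V"
  using Vcirc_subset finite_hyp finite_subset by blast

lemma ex_adj: "x \<in> hyp n \<Longrightarrow> \<exists>y. adj x y"
  using adj_flip[of 0 x] n_ge_1 by (auto simp: hyp_def)

text \<open>A vertex of \<open>V\<^sub>n\<^sup>\<circ>\<close> is unoccupied or has no occupied neighbour; in both cases all
  \<open>n\<close> terms of \<open>Z x\<close> are equal.\<close>

lemma mu_Vcirc:
  assumes "x \<in> V"
  shows "mu x = real n"
proof -
  have x: "x \<in> hyp n" "x \<notin> S"
    using assms by (auto simp: Vcirc_def)
  have card: "card {y. adj x y} = n"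
    using x by (simp add: card_neighbours hyp_def)
  show ?thesis
  proof (cases "occupied u G x")
    case False
    then have Hx: "H x = 0"
      by (simp add: Hn_def)
    have "Z x = (\<Sum>y\<in>{y. adj x y}. 1)"
      unfolding Z_def
    proof (rule sum.cong)
      fix y
      assume "y \<in> {y. adj x y}"
      then have "H y \<le> 0"
        using Hn_nonpos adj_in_hyp x by blast
      then show "exp (- \<beta> * max 0 (H y - H x)) = 1"
        using Hx by simp
    qed simp
    then show ?thesis
      using card by (simp add: mu_def Hx)
  next
    case True
    then have "\<And>y. adj x y \<Longrightarrow> H y = 0"
      using x by (auto simp: Vstar_def Istar_def Hn_def)
    moreover have "H x \<le> 0"
      using Hn_nonpos x by blast
    ultimately have "Z x = (\<Sum>y\<in>{y. adj x y}. exp (\<beta> * H x))"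
      unfolding Z_def by (intro sum.cong) auto
    then have "Z x = real n * exp (\<beta> * H x)"
      using card by simp
    then show ?thesis
      by (simp add: mu_def mult.assoc exp_add[symmetric])
  qed
qed

lemma trans_prob_outside: "x \<in> hyp n \<Longrightarrow> y \<notin> hyp n \<Longrightarrow> p x y = 0"
  using adj_in_hyp by (auto simp: trans_prob_eq)

lemma trans_prob_row_sum:
  assumes "x \<in> hyp n"
  shows "(\<Sum>y\<in>hyp n. p x y) = 1"
proof -
  obtain y0 where "adj x y0"
    using ex_adj assms by blast
  have "{y. adj x y} \<subseteq> hyp n"
    using adj_in_hyp assms by blast
  then have "(\<Sum>y\<in>hyp n. p x y) = (\<Sum>y\<in>{y. adj x y}. p x y)"
    by (intro sum.mono_neutral_right finite_hyp) (auto simp: trans_prob_eq)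
  also have "\<dots> = (\<Sum>y\<in>{y. adj x y}. exp (- \<beta> * max 0 (H y - H x)) / Z x)"
    by (rule sum.cong) (auto simp: trans_prob_eq)
  also have "\<dots> = Z x / Z x"
    by (simp add: Z_def sum_divide_distrib[symmetric])
  also have "\<dots> = 1"
    using Z_pos[OF \<open>adj x y0\<close>] by simp
  finally show ?thesis .
qed

lemma trans_prob_le_1:
  assumes "x \<in> hyp n"
  shows "p x y \<le> 1"
proof (cases "y \<in> hyp n")
  case True
  then have "p x y \<le> (\<Sum>y\<in>hyp n. p x y)"
    by (intro member_le_sum) (auto simp: trans_prob_nonneg finite_hyp)
  then show ?thesis
    using trans_prob_row_sum[OF assms] by simp
qed (simp add: trans_prob_outside assms)

lemma taboo_nonneg: "tb k z y \<ge> 0"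
  by (induction k arbitrary: z) (auto intro!: sum_nonneg mult_nonneg_nonneg trans_prob_nonneg)

lemma taboo_Suc_right: "tb (Suc k) z y = (\<Sum>w\<in>S. tb k z w * p w y)"
proof (induction k arbitrary: z)
  case 0
  then show ?case
    by simp
next
  case (Suc k)
  have "tb (Suc (Suc k)) z y = (\<Sum>w\<in>S. \<Sum>w'\<in>S. p z w * tb k w w' * p w' y)"
    using Suc by (simp add: sum_distrib_left mult.assoc)
  also have "\<dots> = (\<Sum>w'\<in>S. \<Sum>w\<in>S. p z w * tb k w w' * p w' y)"
    by (rule sum.swap)
  also have "\<dots> = (\<Sum>w'\<in>S. tb (Suc k) z w' * p w' y)"
    by (simp add: sum_distrib_right)
  finally show ?case .
qed

lemma taboo_reversible: "mu z * tb k z y = mu y * tb k y z"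
proof (induction k arbitrary: z y)
  case 0
  then show ?case
    using trans_prob_reversible[of z y] by (simp add: mult.commute)
next
  case (Suc k)
  have "mu z * tb (Suc k) z y = (\<Sum>w\<in>S. (p z w * mu z) * tb k w y)"
    by (simp add: sum_distrib_left mult_ac)
  also have "\<dots> = (\<Sum>w\<in>S. p w z * (mu y * tb k y w))"
    by (simp add: trans_prob_reversible mult.assoc Suc)
  also have "\<dots> = mu y * (\<Sum>w\<in>S. tb k y w * p w z)"
    by (simp add: sum_distrib_left mult_ac)
  also have "\<dots> = mu y * tb (Suc k) y z"
    by (simp only: taboo_Suc_right)
  finally show ?case .
qed

lemma trace_prob_sym:
  assumes "z \<in> V" "y \<in> V"
  shows "tr z y = tr y z"
proof -
  have "tb k z y = tb k y z" for k
    using taboo_reversible[of z k y] mu_Vcirc[OF assms(1)] mu_Vcirc[OF assms(2)] n_ge_1 by simp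
  then show ?thesis
    by (simp add: trace_prob_def)
qed

section \<open>The trace chain is stochastic\<close>

text \<open>\<open>stay_prob k z\<close> is \<open>P\<^sub>z(J(1), \<dots>, J(k) \<in> V\<^sub>n\<^sup>\<star>)\<close>.\<close>

definition stay_prob :: "nat \<Rightarrow> bool list \<Rightarrow> real" where
  "stay_prob k z = (\<Sum>y\<in>hyp n. tb k z y)"

lemma stay_prob_0: "z \<in> hyp n \<Longrightarrow> stay_prob 0 z = 1"
  by (simp add: stay_prob_def trans_prob_row_sum)

lemma stay_prob_Suc_right: "stay_prob (Suc k) z = (\<Sum>w\<in>S. tb k z w)"
proof -
  have "stay_prob (Suc k) z = (\<Sum>w\<in>S. \<Sum>y\<in>hyp n. tb k z w * p w y)"
    unfolding stay_prob_def taboo_Suc_right by (rule sum.swap)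
  also have "\<dots> = (\<Sum>w\<in>S. tb k z w * (\<Sum>y\<in>hyp n. p w y))"
    by (simp add: sum_distrib_left)
  also have "\<dots> = (\<Sum>w\<in>S. tb k z w)"
    using Vstar_subset trans_prob_row_sum by (intro sum.cong) auto
  finally show ?thesis .
qed

lemma stay_prob_Suc: "stay_prob (Suc k) z = (\<Sum>w\<in>S. p z w * stay_prob k w)"
proof -
  have "stay_prob (Suc k) z = (\<Sum>w\<in>S. \<Sum>y\<in>hyp n. p z w * tb k w y)"
    unfolding stay_prob_def taboo.simps by (rule sum.swap)
  then show ?thesis
    by (simp add: stay_prob_def sum_distrib_left)
qed

lemma stay_prob_split: "stay_prob k z = (\<Sum>y\<in>V. tb k z y) + stay_prob (Suc k) z"
proof -
  have "stay_prob k z = (\<Sum>y\<in>V \<union> S. tb k z y)"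
    by (simp add: stay_prob_def Vcirc_Un_Vstar)
  also have "\<dots> = (\<Sum>y\<in>V. tb k z y) + (\<Sum>y\<in>S. tb k z y)"
    using finite_Vcirc finite_Vstar Vcirc_Vstar_disjoint by (intro sum.union_disjoint) auto
  finally show ?thesis
    by (simp add: stay_prob_Suc_right)
qed

lemma stay_prob_nonneg: "stay_prob k z \<ge> 0"
  unfolding stay_prob_def by (intro sum_nonneg taboo_nonneg)

lemma stay_prob_antimono: "k \<le> k' \<Longrightarrow> stay_prob k' z \<le> stay_prob k z"
proof (rule lift_Suc_antimono_le[of "\<lambda>k. stay_prob k z"])
  show "stay_prob (Suc k) z \<le> stay_prob k z" for k
    using stay_prob_split[of k z] sum_nonneg[of V "\<lambda>y. tb k z y"] taboo_nonneg by force
qed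

lemma sum_taboo_Vcirc: "(\<Sum>j<K. \<Sum>y\<in>V. tb j z y) = stay_prob 0 z - stay_prob K z"
proof (induction K)
  case (Suc K)
  then show ?case
    using stay_prob_split[of K z] by simp
qed simp

definition min_trans_prob :: real where
  "min_trans_prob = Min ((\<lambda>(a, b). p a b) ` (SIGMA a:hyp n. {b. adj a b}))"

abbreviation "q \<equiv> min_trans_prob"

lemma finite_adj_pairs: "finite (SIGMA a:hyp n. {b. adj a b})"
  by (intro finite_SigmaI finite_hyp finite_neighbours)

lemma min_trans_prob_le: "a \<in> hyp n \<Longrightarrow> adj a b \<Longrightarrow> q \<le> p a b"
  unfolding min_trans_prob_def by (rule Min_le) (use finite_adj_pairs in auto)

lemma ex_adj_pair: obtains a b where "a \<in> hyp n" "adj a b"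
proof -
  have "replicate n True \<in> hyp n"
    by (simp add: hyp_def)
  then show ?thesis
    using ex_adj that by blast
qed

lemma min_trans_prob_pos: "q > 0"
proof -
  obtain a b where "a \<in> hyp n" "adj a b"
    by (rule ex_adj_pair)
  then have "(SIGMA a:hyp n. {b. adj a b}) \<noteq> {}"
    by blast
  then show ?thesis
    unfolding min_trans_prob_def using finite_adj_pairs trans_prob_pos by (subst Min_gr_iff) auto
qed

lemma min_trans_prob_le_1: "q \<le> 1"
proof -
  obtain a b where "a \<in> hyp n" "adj a b"
    by (rule ex_adj_pair)
  then show ?thesis
    using min_trans_prob_le trans_prob_le_1 by (meson order_trans)
qed

definition stay_prob_start :: "nat \<Rightarrow> bool list \<Rightarrow> real" where
  "stay_prob_start k z = (if z \<in> S then stay_prob k z else 0)"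

lemma stay_prob_Suc_eq_start:
  "stay_prob (Suc k) z = (\<Sum>w\<in>hyp n. p z w * stay_prob_start k w)"
proof -
  have "(\<Sum>w\<in>hyp n. p z w * stay_prob_start k w) = (\<Sum>w\<in>S. p z w * stay_prob_start k w)"
    by (rule sum.mono_neutral_right[OF finite_hyp Vstar_subset]) (auto simp: stay_prob_start_def)
  then show ?thesis
    by (simp add: stay_prob_Suc stay_prob_start_def)
qed

text \<open>Flipping the \<open>L\<close> coordinates in which \<open>z\<close> differs from \<open>v \<in> V\<^sub>n\<^sup>\<circ>\<close> one by one leads
  from \<open>z\<close> into \<open>V\<^sub>n\<^sup>\<circ>\<close> within \<open>L\<close> steps with probability at least \<open>q\<^sup>L\<close>.\<close>

lemma stay_prob_start_escape:
  assumes bound: "\<forall>w\<in>hyp n. stay_prob K w \<le> s" and v: "v \<in> V"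
  shows "z \<in> hyp n \<Longrightarrow> hamming_dist z v = L \<Longrightarrow> K + L \<le> K' \<Longrightarrow>
    stay_prob_start K' z \<le> s * (1 - q ^ L)"
proof (induction L arbitrary: z K')
  case 0
  then have "z = v"
    using v Vcirc_subset by (intro hamming_dist_eq_0_imp_eq) (auto simp: hyp_def)
  then show ?case
    using v Vcirc_Vstar_disjoint by (auto simp: stay_prob_start_def)
next
  case (Suc L)
  have s: "s \<ge> 0"
    using bound v Vcirc_subset stay_prob_nonneg[of K v] by force
  have qL: "q ^ Suc L \<le> 1"
    using min_trans_prob_pos min_trans_prob_le_1 by (intro power_le_one) auto
  show ?case
  proof (cases "z \<in> S")
    case False
    then show ?thesis
      using s qL by (simp add: stay_prob_start_def)
  next
    case True
    have "length z = length v"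
      using Suc.prems v Vcirc_subset by (auto simp: hyp_def)
    then obtain i where i: "i < length z" "hamming_dist (flip z i) v = L"
      using hamming_dist_SucE[OF Suc.prems(2)] by blast
    define z' where "z' = flip z i"
    have z': "z' \<in> hyp n" "adj z z'"
      unfolding z'_def using Suc.prems(1) i(1) by (simp_all add: flip_in_hyp adj_flip)
    obtain K'' where K'': "K' = Suc K''" "K + L \<le> K''"
      using Suc.prems(3) by (cases K') auto
    have IH: "stay_prob_start K'' z' \<le> s * (1 - q ^ L)"
      using Suc.IH[OF z'(1) _ K''(2)] i(2) by (simp add: z'_def)
    define f where "f w = s - (if w = z' then s * q ^ L else 0)" for w
    have le_f: "stay_prob_start K'' w \<le> f w" if "w \<in> hyp n" for w
    proof (cases "w = z'")
      case True
      then show ?thesis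
        using IH by (simp add: f_def algebra_simps)
    next
      case False
      have "stay_prob_start K'' w \<le> s"
        using stay_prob_antimono[of K K'' w] K'' bound that s by (auto simp: stay_prob_start_def)
      then show ?thesis
        using False by (simp add: f_def)
    qed
    have "stay_prob_start K' z = (\<Sum>w\<in>hyp n. p z w * stay_prob_start K'' w)"
      using True K'' by (simp add: stay_prob_start_def stay_prob_Suc_eq_start)
    also have "\<dots> \<le> (\<Sum>w\<in>hyp n. p z w * f w)"
      using le_f trans_prob_nonneg by (intro sum_mono mult_left_mono) auto
    also have "\<dots> = s - p z z' * (s * q ^ L)"
      using z'(1) trans_prob_row_sum[OF Suc.prems(1)] finite_hyp
      by (simp add: f_def right_diff_distrib sum_subtractf sum_distrib_right[symmetric]
          if_distrib[of "\<lambda>x. p z w * x" for w] cong: if_cong)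
    also have "\<dots> \<le> s - q * (s * q ^ L)"
      using min_trans_prob_le[OF Suc.prems(1) z'(2)] s min_trans_prob_pos
      by (intro diff_left_mono mult_right_mono) auto
    also have "\<dots> = s * (1 - q ^ Suc L)"
      by (simp add: algebra_simps)
    finally show ?thesis .
  qed
qed

lemma stay_prob_contract:
  assumes bound: "\<forall>w\<in>hyp n. stay_prob K w \<le> s" and v: "v \<in> V" and z: "z \<in> hyp n"
  shows "stay_prob (Suc (K + n)) z \<le> s * (1 - q ^ n)"
proof -
  have s: "s \<ge> 0"
    using bound v Vcirc_subset stay_prob_nonneg[of K v] by force
  have "stay_prob_start (K + n) w \<le> s * (1 - q ^ n)" if w: "w \<in> hyp n" for w
  proof -
    have d: "hamming_dist w v \<le> n"
      using hamming_dist_le_length[of w v] w by (simp add: hyp_def)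
    then have "stay_prob_start (K + n) w \<le> s * (1 - q ^ hamming_dist w v)"
      using stay_prob_start_escape[OF bound v w refl] by simp
    also have "\<dots> \<le> s * (1 - q ^ n)"
      using min_trans_prob_pos min_trans_prob_le_1 d s
      by (intro mult_left_mono diff_left_mono power_decreasing) auto
    finally show ?thesis .
  qed
  then have "(\<Sum>w\<in>hyp n. p z w * stay_prob_start (K + n) w) \<le> (\<Sum>w\<in>hyp n. p z w * (s * (1 - q ^ n)))"
    using trans_prob_nonneg by (intro sum_mono mult_left_mono) auto
  then show ?thesis
    using trans_prob_row_sum[OF z] by (simp add: stay_prob_Suc_eq_start sum_distrib_right[symmetric])
qed

lemma stay_prob_geometric:
  assumes "v \<in> V"
  shows "\<forall>z\<in>hyp n. stay_prob (j * Suc n) z \<le> (1 - q ^ n) ^ j"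
proof (induction j)
  case 0
  then show ?case
    by (simp add: stay_prob_0)
next
  case (Suc j)
  show ?case
  proof
    fix z
    assume "z \<in> hyp n"
    have "stay_prob (Suc j * Suc n) z = stay_prob (Suc (j * Suc n + n)) z"
      by (simp add: algebra_simps)
    also have "\<dots> \<le> (1 - q ^ n) ^ j * (1 - q ^ n)"
      by (rule stay_prob_contract[OF Suc.IH assms \<open>z \<in> hyp n\<close>])
    finally show "stay_prob (Suc j * Suc n) z \<le> (1 - q ^ n) ^ Suc j"
      by (simp add: mult.commute)
  qed
qed

lemma stay_prob_tendsto_0:
  assumes v: "v \<in> V" and z: "z \<in> hyp n"
  shows "(\<lambda>k. stay_prob k z) \<longlonglongrightarrow> 0"
proof (rule LIMSEQ_I)
  fix r :: real
  assume "r > 0"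
  have "0 < q ^ n" "q ^ n \<le> 1"
    using min_trans_prob_pos min_trans_prob_le_1 by (auto simp: power_le_one)
  then have "\<bar>1 - q ^ n\<bar> < 1"
    by auto
  from Archimedean_eventually_pow_inverse[OF this \<open>r > 0\<close>]
  obtain j where j: "\<bar>(1 - q ^ n) ^ j\<bar> < r"
    by (auto simp: eventually_sequentially)
  have "norm (stay_prob k z - 0) < r" if "k \<ge> j * Suc n" for k
  proof -
    have "stay_prob k z \<le> stay_prob (j * Suc n) z"
      using that by (rule stay_prob_antimono)
    also have "\<dots> \<le> (1 - q ^ n) ^ j"
      using stay_prob_geometric[OF v] z by blast
    finally show ?thesis
      using j stay_prob_nonneg[of k z] by simp
  qed
  then show "\<exists>k0. \<forall>k\<ge>k0. norm (stay_prob k z - 0) < r"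
    by blast
qed

lemma summable_taboo:
  assumes "x \<in> hyp n" "y \<in> V"
  shows "summable (\<lambda>k. tb k x y)"
proof (rule summableI_nonneg_bounded)
  show "0 \<le> tb k x y" for k
    by (rule taboo_nonneg)
  fix K
  have "(\<Sum>k<K. tb k x y) \<le> (\<Sum>k<K. \<Sum>y'\<in>V. tb k x y')"
    using assms finite_Vcirc taboo_nonneg by (intro sum_mono member_le_sum) auto
  also have "\<dots> = 1 - stay_prob K x"
    by (simp add: sum_taboo_Vcirc stay_prob_0[OF assms(1)])
  also have "\<dots> \<le> 1"
    using stay_prob_nonneg[of K x] by simp
  finally show "(\<Sum>k<K. tb k x y) \<le> 1" .
qed

lemma trace_prob_nonneg: "x \<in> hyp n \<Longrightarrow> y \<in> V \<Longrightarrow> tr x y \<ge> 0"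
  unfolding trace_prob_def by (rule suminf_nonneg[OF summable_taboo]) (auto simp: taboo_nonneg)

lemma trace_prob_row_sum:
  assumes x: "x \<in> hyp n" and "V \<noteq> {}"
  shows "(\<Sum>y\<in>V. tr x y) = 1"
proof -
  obtain v where v: "v \<in> V"
    using \<open>V \<noteq> {}\<close> by blast
  have "(\<lambda>K. 1 - stay_prob K x) \<longlonglongrightarrow> 1 - 0"
    by (intro tendsto_diff tendsto_const stay_prob_tendsto_0[OF v x])
  then have "(\<lambda>k. \<Sum>y\<in>V. tb k x y) sums 1"
    unfolding sums_def sum_taboo_Vcirc stay_prob_0[OF x] by simp
  then have "(\<Sum>k. \<Sum>y\<in>V. tb k x y) = 1"
    by (rule sums_unique[symmetric])
  moreover have "(\<Sum>k. \<Sum>y\<in>V. tb k x y) = (\<Sum>y\<in>V. tr x y)"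
    unfolding trace_prob_def using summable_taboo[OF x] by (rule suminf_sum)
  ultimately show ?thesis
    by simp
qed

end

section \<open>Quadratic forms of powers of a symmetric kernel\<close>

lemma log_convex_ge_geometric:
  fixes c :: "nat \<Rightarrow> real"
  assumes nonneg: "\<And>m. c m \<ge> 0"
    and log_convex: "\<And>m. c (Suc m) ^ 2 \<le> c m * c (Suc (Suc m))"
    and "\<rho> \<ge> 0" and "c 1 \<ge> \<rho> * c 0"
  shows "c m \<ge> \<rho> ^ m * c 0"
proof -
  have ratio: "c (Suc m) \<ge> \<rho> * c m" for m
  proof (induction m)
    case 0
    then show ?case
      using assms(4) by simp
  next
    case (Suc m)
    show ?case
    proof (cases "c m = 0")
      case True
      then have "c (Suc m) = 0"
        using log_convex[of m] by simp
      then show ?thesis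
        using nonneg by simp
    next
      case False
      then have "c m > 0"
        using nonneg[of m] by simp
      have "c m * (\<rho> * c (Suc m)) = (\<rho> * c m) * c (Suc m)"
        by simp
      also have "\<dots> \<le> c (Suc m) * c (Suc m)"
        using Suc nonneg by (intro mult_right_mono) auto
      also have "\<dots> \<le> c m * c (Suc (Suc m))"
        using log_convex[of m] by (simp add: power2_eq_square)
      finally show ?thesis
        using \<open>c m > 0\<close> by simp
    qed
  qed
  show ?thesis
  proof (induction m)
    case (Suc m)
    have "\<rho> ^ Suc m * c 0 \<le> \<rho> * c m"
      using Suc \<open>\<rho> \<ge> 0\<close> by (simp add: mult.assoc mult_left_mono)
    also have "\<dots> \<le> c (Suc m)"
      by (rule ratio)
    finally show ?case .
  qed simp
qed

lemma symmetric_kernel_iterate_shift: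
  fixes K :: "'a \<Rightarrow> 'a \<Rightarrow> real" and f :: "nat \<Rightarrow> 'a \<Rightarrow> real"
  assumes sym: "\<And>x y. x \<in> D \<Longrightarrow> y \<in> D \<Longrightarrow> K x y = K y x"
    and iterate: "\<And>k x. x \<in> D \<Longrightarrow> f (Suc k) x = (\<Sum>y\<in>D. K x y * f k y)"
  shows "(\<Sum>x\<in>D. f i x * f j x) = (\<Sum>x\<in>D. f 0 x * f (i + j) x)"
proof (induction i arbitrary: j)
  case (Suc i)
  have "(\<Sum>x\<in>D. f (Suc i) x * f j x) = (\<Sum>x\<in>D. \<Sum>y\<in>D. K x y * f i y * f j x)"
    by (simp add: iterate sum_distrib_right)
  also have "\<dots> = (\<Sum>y\<in>D. \<Sum>x\<in>D. f i y * (K y x * f j x))"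
    by (subst sum.swap) (intro sum.cong refl; simp add: sym)
  also have "\<dots> = (\<Sum>y\<in>D. f i y * f (Suc j) y)"
    by (simp add: iterate sum_distrib_left)
  also have "\<dots> = (\<Sum>x\<in>D. f 0 x * f (Suc i + j) x)"
    by (simp add: Suc.IH)
  finally show ?case .
qed simp

lemma symmetric_kernel_even_iterate_ge:
  fixes K :: "'a \<Rightarrow> 'a \<Rightarrow> real" and f :: "nat \<Rightarrow> 'a \<Rightarrow> real"
  assumes sym: "\<And>x y. x \<in> D \<Longrightarrow> y \<in> D \<Longrightarrow> K x y = K y x"
    and iterate: "\<And>k x. x \<in> D \<Longrightarrow> f (Suc k) x = (\<Sum>y\<in>D. K x y * f k y)"
    and pos: "(\<Sum>x\<in>D. f 0 x * f 0 x) > 0"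
  shows "(\<Sum>x\<in>D. f 0 x * f (2 * m) x)
    \<ge> ((\<Sum>x\<in>D. f 0 x * f 1 x) / (\<Sum>x\<in>D. f 0 x * f 0 x)) ^ (2 * m) * (\<Sum>x\<in>D. f 0 x * f 0 x)"
proof -
  define s where "s k = (\<Sum>x\<in>D. f 0 x * f k x)" for k
  have shift: "(\<Sum>x\<in>D. f i x * f j x) = s (i + j)" for i j
    unfolding s_def using sym iterate by (rule symmetric_kernel_iterate_shift)
  have cauchy_schwarz: "s (i + j) ^ 2 \<le> s (2 * i) * s (2 * j)" for i j
    using Cauchy_Schwarz_ineq_sum[of "f i" "f j" D] shift[of i j] shift[of i i] shift[of j j]
    by (simp add: power2_eq_square mult_2)
  have "s (2 * m) \<ge> ((s 1 / s 0) ^ 2) ^ m * s (2 * 0)"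
  proof (rule log_convex_ge_geometric[where c = "\<lambda>m. s (2 * m)"])
    show "s (2 * m) \<ge> 0" for m
      using shift[of m m] sum_nonneg[of D "\<lambda>x. f m x * f m x"] by (simp add: mult_2)
    show "s (2 * Suc m) ^ 2 \<le> s (2 * m) * s (2 * Suc (Suc m))" for m
      using cauchy_schwarz[of m "Suc (Suc m)"] by (simp add: mult_2)
    have "(s 1 / s 0) ^ 2 * s 0 = s 1 ^ 2 / s 0"
      using pos by (simp add: s_def power2_eq_square)
    also have "\<dots> \<le> s 2"
      using cauchy_schwarz[of 0 1] pos by (simp add: s_def divide_le_eq mult.commute)
    finally show "(s 1 / s 0) ^ 2 * s (2 * 0) \<le> s (2 * 1)"
      by simp
  qed simp
  then show ?thesis
    by (simp add: s_def power_mult)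
qed

section \<open>Hitting times of the trace chain\<close>

lemma exp_le_ratio:
  fixes x :: real
  assumes "0 \<le> x" "x \<le> 1/4"
  shows "exp (- 2 * x) \<le> (1 - 2 * x) / (1 - x)"
proof -
  have "exp (- 2 * x) \<le> 1 / (1 + 2 * x)"
    using exp_ge_add_one_self[of "2 * x"] assms by (simp add: exp_minus inverse_eq_divide frac_le)
  also have "\<dots> \<le> (1 - 2 * x) / (1 - x)"
  proof -
    have "4 * x * x \<le> x"
      using mult_right_mono[of "4 * x" 1 x] assms by simp
    then have "1 - x \<le> (1 - 2 * x) * (1 + 2 * x)"
      by (simp add: algebra_simps)
    then show ?thesis
      using assms by (simp add: divide_simps)
  qed
  finally show ?thesis .
qed

lemma exp_shift_ge:
  fixes x t :: real
  assumes "0 \<le> x" "x \<le> 1/4" "0 \<le> t"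
  shows "exp (- 2 * t * x) - 3 * x \<le> exp (- 2 * x * (t + 1)) * (1 - x)"
proof -
  define E where "E = exp (- 2 * t * x)"
  have "E \<le> 1"
    using assms by (simp add: E_def mult_nonneg_nonneg)
  then have "E - 3 * x \<le> E - 3 * x * E"
    using assms by (simp add: mult_left_le)
  also have "\<dots> \<le> E * ((1 - 2 * x) * (1 - x))"
    using assms by (simp add: E_def algebra_simps)
  also have "\<dots> \<le> E * (exp (- 2 * x) * (1 - x))"
    using exp_ge_add_one_self[of "- 2 * x"] assms by (intro mult_left_mono mult_right_mono) (auto simp: E_def)
  also have "\<dots> = exp (- 2 * x * (t + 1)) * (1 - x)"
    by (simp add: E_def exp_add[symmetric] algebra_simps)
  finally show ?thesis
    by (simp add: E_def)
qed

locale avoidance = environment +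
  fixes B :: "bool list set"
  assumes B_subset: "B \<subseteq> V" and Vcirc_nonempty: "V \<noteq> {}"
begin

abbreviation "av \<equiv> avoid \<beta> u G n B"

lemma finite_B: "finite B"
  using finite_Vcirc B_subset finite_subset by blast

lemma avoid_in_B: "x \<in> B \<Longrightarrow> av k x = 0"
  by (cases k) auto

lemma avoid_Suc_outside:
  assumes "x \<in> V - B"
  shows "av (Suc k) x = (\<Sum>y\<in>V - B. tr x y * av k y)"
proof -
  have "av (Suc k) x = (\<Sum>y\<in>V. tr x y * av k y)"
    using assms by simp
  also have "\<dots> = (\<Sum>y\<in>V - B. tr x y * av k y)"
    by (rule sum.mono_neutral_right) (auto simp: finite_Vcirc avoid_in_B)
  finally show ?thesis .
qed

lemma avoid_Suc_0:
  assumes "x \<in> V - B"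
  shows "av (Suc 0) x = (\<Sum>y\<in>V - B. tr x y)"
proof -
  have "av (Suc 0) x = (\<Sum>y\<in>V - B. tr x y * av 0 y)"
    by (rule avoid_Suc_outside[OF assms])
  also have "\<dots> = (\<Sum>y\<in>V - B. tr x y)"
    by (intro sum.cong) auto
  finally show ?thesis .
qed

lemma avoid_bounds: "x \<in> V \<Longrightarrow> 0 \<le> av k x \<and> av k x \<le> 1"
proof (induction k arbitrary: x)
  case (Suc k)
  show ?case
  proof (cases "x \<in> B")
    case False
    have x: "x \<in> hyp n"
      using Suc.prems Vcirc_subset by blast
    have "0 \<le> (\<Sum>y\<in>V. tr x y * av k y)"
      using Suc.IH trace_prob_nonneg[OF x] by (intro sum_nonneg) auto
    moreover have "(\<Sum>y\<in>V. tr x y * av k y) \<le> (\<Sum>y\<in>V. tr x y)"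
      using Suc.IH trace_prob_nonneg[OF x] by (intro sum_mono mult_left_le) auto
    ultimately show ?thesis
      using False trace_prob_row_sum[OF x Vcirc_nonempty] by simp
  qed simp
qed simp

lemma avoid_Suc_le: "x \<in> V \<Longrightarrow> av (Suc k) x \<le> av k x"
proof (induction k arbitrary: x)
  case 0
  then show ?case
    using avoid_bounds[OF 0, of 1] by (cases "x \<in> B") auto
next
  case (Suc k)
  show ?case
  proof (cases "x \<in> B")
    case False
    have x: "x \<in> hyp n"
      using Suc.prems Vcirc_subset by blast
    have "(\<Sum>y\<in>V. tr x y * av (Suc k) y) \<le> (\<Sum>y\<in>V. tr x y * av k y)"
      using Suc.IH trace_prob_nonneg[OF x] by (intro sum_mono mult_left_mono) auto
    then show ?thesis
      using False by simp
  qed simp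
qed

lemma avoid_antimono: "x \<in> V \<Longrightarrow> k \<le> k' \<Longrightarrow> av k' x \<le> av k x"
  using lift_Suc_antimono_le[of "\<lambda>j. av j x"] avoid_Suc_le by blast

definition avoid_sum :: "nat \<Rightarrow> real" where
  "avoid_sum k = (\<Sum>x\<in>V. av k x)"

lemma avoid_sum_eq_inner: "avoid_sum k = (\<Sum>x\<in>V - B. av 0 x * av k x)"
proof -
  have "avoid_sum k = (\<Sum>x\<in>V - B. av k x)"
    unfolding avoid_sum_def by (rule sum.mono_neutral_right) (auto simp: finite_Vcirc avoid_in_B)
  then show ?thesis
    by simp
qed

lemma avoid_sum_0: "avoid_sum 0 = real (card V) - real (card B)"
proof -
  have "avoid_sum 0 = real (card (V - B))"
    by (simp add: avoid_sum_eq_inner)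
  then show ?thesis
    using B_subset finite_B by (simp add: card_Diff_subset of_nat_diff card_mono finite_Vcirc)
qed

lemma avoid_sum_1_ge: "avoid_sum 1 \<ge> real (card V) - 2 * real (card B)"
proof -
  have row: "(\<Sum>y\<in>V - B. tr x y) = 1 - (\<Sum>y\<in>B. tr x y)" if "x \<in> V" for x
  proof -
    have "(\<Sum>y\<in>V. tr x y) = (\<Sum>y\<in>V - B. tr x y) + (\<Sum>y\<in>B. tr x y)"
      using B_subset finite_Vcirc by (metis Diff_partition sum.subset_diff)
    then show ?thesis
      using trace_prob_row_sum Vcirc_subset Vcirc_nonempty that by auto
  qed
  have out_of_B: "(\<Sum>x\<in>V - B. tr y x) \<le> 1" if "y \<in> B" for y
  proof -
    have y: "y \<in> hyp n"
      using that B_subset Vcirc_subset by blast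
    have "(\<Sum>x\<in>V - B. tr y x) \<le> (\<Sum>x\<in>V. tr y x)"
      using finite_Vcirc trace_prob_nonneg[OF y] by (intro sum_mono2) auto
    then show ?thesis
      using trace_prob_row_sum[OF y Vcirc_nonempty] by simp
  qed
  have "avoid_sum 1 = (\<Sum>x\<in>V - B. \<Sum>y\<in>V - B. tr x y)"
    unfolding avoid_sum_eq_inner by (intro sum.cong) (auto simp: avoid_Suc_0 simp del: avoid.simps(2))
  also have "\<dots> = real (card (V - B)) - (\<Sum>x\<in>V - B. \<Sum>y\<in>B. tr y x)"
    using B_subset by (simp add: row sum_subtractf trace_prob_sym subset_iff)
  also have "\<dots> = real (card (V - B)) - (\<Sum>y\<in>B. \<Sum>x\<in>V - B. tr y x)"
    by (simp add: sum.swap[of _ "V - B"])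
  also have "\<dots> \<ge> real (card (V - B)) - real (card B)"
    using sum_mono[OF out_of_B] by simp
  finally show ?thesis
    using B_subset finite_B by (simp add: card_Diff_subset of_nat_diff card_mono finite_Vcirc)
qed

lemma avoid_sum_even_ge:
  assumes "avoid_sum 0 > 0"
  shows "avoid_sum (2 * m) \<ge> (avoid_sum 1 / avoid_sum 0) ^ (2 * m) * avoid_sum 0"
proof -
  have "(\<Sum>x\<in>V - B. av 0 x * av (2 * m) x)
    \<ge> ((\<Sum>x\<in>V - B. av 0 x * av 1 x) / (\<Sum>x\<in>V - B. av 0 x * av 0 x)) ^ (2 * m)
       * (\<Sum>x\<in>V - B. av 0 x * av 0 x)"
    using trace_prob_sym avoid_Suc_outside assms avoid_sum_eq_inner[of 0]
    by (intro symmetric_kernel_even_iterate_ge[where K = tr and f = av and D = "V - B"]) auto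
  then show ?thesis
    by (simp only: avoid_sum_eq_inner[symmetric])
qed

lemma hit_tail_ge:
  assumes small: "4 * real (card B) \<le> real (card V)" and "t \<ge> 0"
  shows "hit_tail \<beta> u G n B t
    \<ge> exp (- 2 * t * real (card B) / real (card V)) - 3 * real (card B) / real (card V)"
proof -
  define x where "x = real (card B) / real (card V)"
  have V: "real (card V) > 0"
    using finite_Vcirc Vcirc_nonempty by (simp add: card_gt_0_iff)
  have x: "0 \<le> x" "x \<le> 1/4"
    using small V by (simp_all add: x_def divide_simps)
  have a0: "avoid_sum 0 = real (card V) * (1 - x)"
    using V by (simp add: avoid_sum_0 x_def algebra_simps)
  then have a0_pos: "avoid_sum 0 > 0"
    using V x by simp
  have "exp (- 2 * x) \<le> (1 - 2 * x) / (1 - x)"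
    using x by (rule exp_le_ratio)
  also have "\<dots> \<le> avoid_sum 1 / avoid_sum 0"
    using avoid_sum_1_ge a0 a0_pos V x
    by (simp add: x_def divide_simps)
  finally have ratio: "exp (- 2 * x) \<le> avoid_sum 1 / avoid_sum 0" .
  define k where "k = nat \<lfloor>t\<rfloor>"
  define m where "m = (k + 1) div 2"
  have "k \<le> 2 * m" "real (2 * m) \<le> t + 1"
    using \<open>t \<ge> 0\<close> by (auto simp: k_def m_def) linarith
  have "exp (- 2 * x * (t + 1)) * avoid_sum 0 \<le> exp (- 2 * x) ^ (2 * m) * avoid_sum 0"
    using mult_left_mono[OF \<open>real (2 * m) \<le> t + 1\<close> x(1)] a0_pos
    by (simp add: exp_of_nat_mult[symmetric] mult.commute)
  also have "\<dots> \<le> (avoid_sum 1 / avoid_sum 0) ^ (2 * m) * avoid_sum 0"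
    using ratio a0_pos by (intro mult_right_mono power_mono) auto
  also have "\<dots> \<le> avoid_sum (2 * m)"
    using a0_pos by (rule avoid_sum_even_ge)
  also have "\<dots> \<le> avoid_sum k"
    unfolding avoid_sum_def using avoid_antimono \<open>k \<le> 2 * m\<close> by (intro sum_mono) auto
  finally have "exp (- 2 * x * (t + 1)) * (1 - x) \<le> avoid_sum k / real (card V)"
    using V by (simp add: a0 field_simps)
  also have "\<dots> = hit_tail \<beta> u G n B t"
    by (simp add: hit_tail_def avoid_sum_def k_def)
  finally have "exp (- 2 * x * (t + 1)) * (1 - x) \<le> hit_tail \<beta> u G n B t" .
  then show ?thesis
    using exp_shift_ge[OF x \<open>t \<ge> 0\<close>] by (simp add: x_def)
qed

end

section \<open>Few vertices are occupied\<close>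

lemma std_normal_nonpos_ge_half:
  assumes "prob_space M" and distr: "distributed M lborel X std_normal_density"
  shows "measure M {\<omega>\<in>space M. X \<omega> \<le> 0} \<ge> 1/2"
proof -
  interpret prob_space M
    by fact
  have [measurable]: "X \<in> borel_measurable M"
    using distributed_measurable[OF distr] by simp
  have distr_neg: "distributed M lborel (\<lambda>\<omega>. - X \<omega>) std_normal_density"
    using normal_density_affine[OF distr, of "-1" 0] by simp
  have "emeasure M (X -` {..0} \<inter> space M)
      = (\<integral>\<^sup>+x. ennreal (std_normal_density x) * indicator {..0} x \<partial>lborel)"
    by (rule distributed_emeasure[OF distr]) simp
  also have "\<dots> = emeasure M ((\<lambda>\<omega>. - X \<omega>) -` {..0} \<inter> space M)"
    by (rule distributed_emeasure[OF distr_neg, symmetric]) simp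
  finally have sym: "measure M {\<omega>\<in>space M. X \<omega> \<le> 0} = measure M {\<omega>\<in>space M. X \<omega> \<ge> 0}"
    by (simp add: measure_def vimage_def Int_def conj_commute)
  have "{\<omega>\<in>space M. X \<omega> \<le> 0} \<union> {\<omega>\<in>space M. X \<omega> \<ge> 0} = space M"
    by auto
  then have "1 = measure M ({\<omega>\<in>space M. X \<omega> \<le> 0} \<union> {\<omega>\<in>space M. X \<omega> \<ge> 0})"
    by (simp add: prob_space)
  also have "\<dots> \<le> measure M {\<omega>\<in>space M. X \<omega> \<le> 0} + measure M {\<omega>\<in>space M. X \<omega> \<ge> 0}"
    by (rule measure_Un_le) measurable
  finally show ?thesis
    using sym by simp
qed

lemma threshold_nonneg_of_tail:
  assumes "prob_space M" and distr: "\<And>x. distributed M lborel (g x) std_normal_density"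
    and tail: "\<And>n x. n \<ge> 2 \<Longrightarrow> x \<in> hyp n \<Longrightarrow>
      measure M {\<omega> \<in> space M. g x \<omega> \<le> - u n} = real n powr (- c)"
    and "c > 1" and "n \<ge> 2"
  shows "u n \<ge> 0"
proof (rule ccontr)
  interpret prob_space M
    by fact
  assume "\<not> u n \<ge> 0"
  define x where "x = replicate n True"
  have "x \<in> hyp n"
    by (simp add: x_def hyp_def)
  have [measurable]: "g x \<in> borel_measurable M"
    using distributed_measurable[OF distr] by simp
  have "1/2 \<le> measure M {\<omega>\<in>space M. g x \<omega> \<le> 0}"
    using std_normal_nonpos_ge_half[OF \<open>prob_space M\<close> distr] .
  also have "\<dots> \<le> measure M {\<omega>\<in>space M. g x \<omega> \<le> - u n}"
    using \<open>\<not> u n \<ge> 0\<close> by (intro finite_measure_mono) auto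
  also have "\<dots> = real n powr (- c)"
    using tail[OF \<open>n \<ge> 2\<close> \<open>x \<in> hyp n\<close>] .
  also have "\<dots> \<le> 2 powr (- c)"
    using \<open>n \<ge> 2\<close> \<open>c > 1\<close> by (intro powr_mono2') auto
  also have "\<dots> < 2 powr (- 1)"
    using \<open>c > 1\<close> by (intro powr_less_mono) auto
  finally show False
    by (simp add: powr_minus)
qed

text \<open>First moment Borel-Cantelli: Markov's inequality for the number of events that occur.\<close>

lemma (in prob_space) AE_eventually_card_events_less:
  fixes X :: "nat \<Rightarrow> 'b set" and E :: "nat \<Rightarrow> 'b \<Rightarrow> 'a set" and N :: "nat \<Rightarrow> real"
  assumes events [measurable]: "\<And>n x. E n x \<in> events" and finite: "\<And>n. finite (X n)"
    and pos: "\<forall>\<^sub>F n in sequentially. N n > 0"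
    and summable: "summable (\<lambda>n. (\<Sum>x\<in>X n. prob (E n x)) / N n)"
  shows "AE \<omega> in M. \<forall>\<^sub>F n in sequentially. real (card {x \<in> X n. \<omega> \<in> E n x}) < N n"
proof -
  define Y where "Y n \<omega> = (\<Sum>x\<in>X n. indicator (E n x) \<omega> :: real)" for n \<omega>
  have [measurable]: "Y n \<in> borel_measurable M" for n
    unfolding Y_def by measurable
  have integrable: "integrable M (Y n)" for n
    unfolding Y_def by (intro Bochner_Integration.integrable_sum integrable_real_indicator)
      (auto simp: emeasure_eq_measure)
  have expectation: "expectation (Y n) = (\<Sum>x\<in>X n. prob (E n x))" for n
    unfolding Y_def by (subst Bochner_Integration.integral_sum) (auto simp: emeasure_eq_measure)
  have Y_card: "Y n \<omega> = real (card {x \<in> X n. \<omega> \<in> E n x})" for n \<omega>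
    by (simp add: Y_def indicator_def sum.If_cases finite Int_def)
  define A where "A n = {\<omega> \<in> space M. Y n \<omega> \<ge> N n}" for n
  have [measurable]: "A n \<in> events" for n
    unfolding A_def by measurable
  have "\<forall>\<^sub>F n in sequentially. norm (prob (A n)) \<le> (\<Sum>x\<in>X n. prob (E n x)) / N n"
    using pos
  proof eventually_elim
    case (elim n)
    have "prob (A n) \<le> expectation (Y n) / N n"
      unfolding A_def using elim
      by (intro integral_Markov_inequality_measure[OF integrable, of "space M"])
        (auto simp: Y_def intro!: sum_nonneg)
    then show ?case
      by (simp add: expectation)
  qed
  then have "summable (\<lambda>n. prob (A n))"
    using summable by (rule summable_comparison_test_ev)
  then have "AE \<omega> in M. \<forall>\<^sub>F n in sequentially. \<omega> \<in> space M - A n"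
    by (intro borel_cantelli_AE1) (auto simp: emeasure_eq_measure)
  then show ?thesis
    by (rule eventually_mono) (auto elim: eventually_mono simp: A_def Y_card)
qed

lemma occupied_eventually_sparse:
  assumes "prob_space M" and distr: "\<And>x. distributed M lborel (g x) std_normal_density"
    and tail: "\<And>n x. n \<ge> 2 \<Longrightarrow> x \<in> hyp n \<Longrightarrow>
      measure M {\<omega> \<in> space M. g x \<omega> \<le> - u n} = real n powr (- c)"
    and "c > 2"
  shows "AE \<omega> in M. \<forall>\<^sub>F n in sequentially.
    real (card {x \<in> hyp n. occupied u (\<lambda>x. g x \<omega>) x}) < 2 ^ n / real n"
proof -
  interpret prob_space M
    by fact
  have [measurable]: "g x \<in> borel_measurable M" for x
    using distributed_measurable[OF distr] by simp
  define E where "E n x = {\<omega> \<in> space M. g x \<omega> \<le> - u n}" for n x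
  have "\<forall>\<^sub>F n in sequentially. (\<Sum>x\<in>hyp n. prob (E n x)) / (2 ^ n / real n) = real n powr (1 - c)"
    using eventually_ge_at_top[of 2]
    by eventually_elim (simp add: E_def tail card_hyp powr_diff powr_minus field_simps)
  then have "summable (\<lambda>n. (\<Sum>x\<in>hyp n. prob (E n x)) / (2 ^ n / real n))
      \<longleftrightarrow> summable (\<lambda>n. real n powr (1 - c))"
    by (rule summable_cong)
  then have "summable (\<lambda>n. (\<Sum>x\<in>hyp n. prob (E n x)) / (2 ^ n / real n))"
    using \<open>c > 2\<close> by (simp add: summable_real_powr_iff)
  then have "AE \<omega> in M. \<forall>\<^sub>F n in sequentially. real (card {x \<in> hyp n. \<omega> \<in> E n x}) < 2 ^ n / real n"
    by (intro AE_eventually_card_events_less eventually_ge_at_top[of 1, THEN eventually_mono])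
      (auto simp: E_def finite_hyp)
  then show ?thesis
    using AE_space
  proof eventually_elim
    case (elim \<omega>)
    then have "{x \<in> hyp n. \<omega> \<in> E n x} = {x \<in> hyp n. occupied u (\<lambda>x. g x \<omega>) x}" for n
      by (auto simp: E_def occupied_def hyp_def)
    then show ?case
      using elim(1) by simp
  qed
qed

lemma (in prob_space) AE_obtain_prob_1:
  assumes "AE \<omega> in M. P \<omega>"
  obtains \<Omega>' where "\<Omega>' \<in> events" "prob \<Omega>' = 1" "\<forall>\<omega>\<in>\<Omega>'. P \<omega>"
proof -
  from assms obtain N where "{\<omega> \<in> space M. \<not> P \<omega>} \<subseteq> N" "emeasure M N = 0" "N \<in> events"
    by (rule AE_E)
  then show ?thesis
    by (intro that[of "space M - N"]) (auto simp: prob_compl emeasure_eq_measure)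
qed

lemma card_Vcirc_ge:
  "real (card (Vcirc u G n)) \<ge> 2 ^ n - real (card {x \<in> hyp n. occupied u G x})"
proof -
  have sub: "Vstar u G n \<subseteq> {x \<in> hyp n. occupied u G x}" "Vstar u G n \<subseteq> hyp n"
    by (auto simp: Vstar_def)
  then have fin: "finite (Vstar u G n)"
    using finite_hyp finite_subset by blast
  have "card (Vstar u G n) \<le> card {x \<in> hyp n. occupied u G x}"
    using sub finite_hyp by (intro card_mono) auto
  moreover have "real (card (Vcirc u G n)) = 2 ^ n - real (card (Vstar u G n))"
    using sub fin card_mono[OF finite_hyp sub(2)]
    by (simp add: Vcirc_def card_Diff_subset card_hyp of_nat_diff)
  ultimately show ?thesis
    by simp
qed

lemma card_Istar_le: "card (A \<inter> Istar u G n) \<le> card {x \<in> hyp n. occupied u G x}"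
  using finite_hyp by (intro card_mono) (auto simp: Istar_def)

lemma hit_tail_ge_if_sparse:
  assumes "n \<ge> 5" "u n \<ge> 0"
    and sparse: "real (card {x \<in> hyp n. occupied u G x}) < 2 ^ n / real n"
    and "A \<subseteq> Vcirc u G n" "t > 0"
  shows "hit_tail \<beta> u G n (A \<inter> Istar u G n) t
    \<ge> exp (- 2 * t * real (card (A \<inter> Istar u G n)) / real (card (Vcirc u G n))) - 3 / ln (real n)"
proof -
  define b where "b = real (card (A \<inter> Istar u G n))"
  define v where "v = real (card (Vcirc u G n))"
  define occ where "occ = real (card {x \<in> hyp n. occupied u G x})"
  have "b \<le> occ" "v \<ge> 2 ^ n - occ" "real n * occ < 2 ^ n"
    using card_Istar_le card_Vcirc_ge sparse \<open>n \<ge> 5\<close> by (simp_all add: b_def v_def occ_def field_simps)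
  moreover have "5 * occ \<le> real n * occ"
    using \<open>n \<ge> 5\<close> by (intro mult_right_mono) (auto simp: occ_def)
  ultimately have "b \<ge> 0" "4 * b \<le> v" "v > occ * (real n - 1)"
    by (auto simp: b_def algebra_simps)
  moreover have "occ * (real n - 1) \<ge> 0"
    using \<open>n \<ge> 5\<close> by (simp add: occ_def)
  ultimately have "v > 0"
    by linarith
  interpret avoidance \<beta> u G n "A \<inter> Istar u G n"
    using \<open>n \<ge> 5\<close> \<open>u n \<ge> 0\<close> \<open>A \<subseteq> Vcirc u G n\<close> \<open>v > 0\<close> by unfold_locales (auto simp: v_def)
  have "3 * b * ln (real n) \<le> 3 * occ * (real n - 1)"
    using \<open>b \<le> occ\<close> \<open>b \<ge> 0\<close> \<open>n \<ge> 5\<close> ln_le_minus_one[of "real n"] by (intro mult_mono) auto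
  then have "b * ln (real n) \<le> v"
    using \<open>v > occ * (real n - 1)\<close> by linarith
  then have "3 * b / v \<le> 3 / ln (real n)"
    using \<open>v > 0\<close> \<open>n \<ge> 5\<close> by (simp add: field_simps)
  then show ?thesis
    using hit_tail_ge[of t] \<open>4 * b \<le> v\<close> \<open>t > 0\<close> by (simp add: b_def v_def)
qed

theorem proposition6p4:
  fixes M :: "'w measure" and g :: "bool list \<Rightarrow> 'w \<Rightarrow> real"
    and u :: "nat \<Rightarrow> real" and \<beta> c :: real
  assumes "prob_space M"
    and "\<And>x. distributed M lborel (g x) std_normal_density"
    and "prob_space.indep_vars M (\<lambda>_. borel) g UNIV"
    and "c > 0" and "\<beta> > 0"
    and "\<And>n x. n \<ge> 2 \<Longrightarrow> x \<in> hyp n \<Longrightarrow>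
           measure M {\<omega> \<in> space M. g x \<omega> \<le> - u n} = real n powr (- c)"
    and "c > 1 + ln 4"
  shows "\<exists>\<epsilon> :: nat \<Rightarrow> real. \<exists>C :: real. (\<epsilon> \<longlonglongrightarrow> 0) \<and>
    (\<exists>\<Omega>' \<in> sets M. measure M \<Omega>' = 1 \<and>
      (\<forall>\<omega> \<in> \<Omega>'. \<forall>\<^sub>F n in sequentially.
         \<forall>A \<subseteq> Vcirc u (\<lambda>x. g x \<omega>) n. \<forall>t > 0.
           hit_tail \<beta> u (\<lambda>x. g x \<omega>) n (A \<inter> Istar u (\<lambda>x. g x \<omega>) n) t
             \<ge> (1 + \<epsilon> n) * exp (- 2 * t * real (card (A \<inter> Istar u (\<lambda>x. g x \<omega>) n))
                                     / real (card (Vcirc u (\<lambda>x. g x \<omega>) n)))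
               - C / ln (real n)))"
proof -
  interpret prob_space M
    by fact
  have "ln 4 > (1 :: real)"
    using ln_less_cancel_iff[of "exp 1" 4] exp_le by simp
  then have "c > 2"
    using \<open>c > 1 + ln 4\<close> by linarith
  obtain \<Omega>' where "\<Omega>' \<in> sets M" "measure M \<Omega>' = 1" and sparse: "\<forall>\<omega>\<in>\<Omega>'. \<forall>\<^sub>F n in sequentially.
      real (card {x \<in> hyp n. occupied u (\<lambda>x. g x \<omega>) x}) < 2 ^ n / real n"
    by (rule AE_obtain_prob_1[OF occupied_eventually_sparse[OF assms(1,2,6) \<open>c > 2\<close>]])
  have "\<forall>\<^sub>F n in sequentially. \<forall>A \<subseteq> Vcirc u (\<lambda>x. g x \<omega>) n. \<forall>t > 0.
      hit_tail \<beta> u (\<lambda>x. g x \<omega>) n (A \<inter> Istar u (\<lambda>x. g x \<omega>) n) t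
        \<ge> exp (- 2 * t * real (card (A \<inter> Istar u (\<lambda>x. g x \<omega>) n))
                  / real (card (Vcirc u (\<lambda>x. g x \<omega>) n))) - 3 / ln (real n)"
    if "\<omega> \<in> \<Omega>'" for \<omega>
    using bspec[OF sparse that] eventually_ge_at_top[of "5 :: nat"]
  proof eventually_elim
    case (elim n)
    then have "u n \<ge> 0"
      using threshold_nonneg_of_tail[OF assms(1,2,6)] \<open>c > 2\<close> by simp
    then show ?case
      using elim hit_tail_ge_if_sparse by simp
  qed
  then show ?thesis
    using \<open>\<Omega>' \<in> sets M\<close> \<open>measure M \<Omega>' = 1\<close> by (intro exI[of _ "\<lambda>_. 0"] exI[of _ 3]) auto
qed

end
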